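(* Fix integers $N\ge 2$ and $K\ge 1$. There exists a Boolean tensor $\mathcal{B}\in\{0,1\}^{N\times N\times K}$ such that no ranking tensor in $\pi(\mathcal{M}^{\text{TransE}})$ is consistent with $\mathcal{B}$.
   Context: A score-based model assigns a score $s_k(i,j)\in\mathbb{R}$ to each triple, $i,j\in\{1,\dots,N\}$, $k\in\{1,\dots,K\}$; its scoring tensor has frontal slices $\mathbf{S}_k$ with $[\mathbf{S}_k]_{ij}=s_k(i,j)$. For a real $N\times N$ matrix $\mathbf{S}$, $\pi(\mathbf{S})$ is the matrix of dense ranks: $\pi_{ij}(\mathbf{S})=1+$ (number of distinct values among entries of $\mathbf{S}$ strictly larger than $s_{ij}$). For tensors, $\pi$ acts slicewise; for a set $X$, $\pi(X)=\{\pi(x):x\in X\}$. TransE of size $r$: parameters $\mathbf{A}\in\mathbb{R}^{N\times r}$ (rows $\mathbf{a}_i$), $\mathbf{R}\in\mathbb{R}^{K\times r}$ (rows $\mathbf{r}_k$), score $-\|\mathbf{a}_i+\mathbf{r}_k-\mathbf{a}_j\|_2^2$; $\mathcal{M}^{\text{TransE}}$ is the set of scoring tensors of all TransE models of all sizes $r\in\mathbb{N}^+$. A ranking tensor $\mathcal{P}$ is consistent with a Boolean tensor $\mathcal{B}$ if for every $k$ and all $i,j,i',j'$: $b_{ijk}=1$ and $b_{i'j'k}=0$ imply $p_{ijk}<p_{i'j'k}$. *)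

theory Defs
  imports Complex_Main
begin

(* Indices i,j range over {1..N}, k over {1..K}. A tensor is a function
   nat => nat => nat => _ ; only values at valid indices matter. *)

definition dense_rank :: "nat \<Rightarrow> (nat \<Rightarrow> nat \<Rightarrow> real) \<Rightarrow> nat \<Rightarrow> nat \<Rightarrow> nat" where
  "dense_rank N S i j = 1 + card {v. \<exists>i'\<in>{1..N}. \<exists>j'\<in>{1..N}. v = S i' j' \<and> v > S i j}"

definition rank_tensor :: "nat \<Rightarrow> (nat \<Rightarrow> nat \<Rightarrow> nat \<Rightarrow> real) \<Rightarrow> (nat \<Rightarrow> nat \<Rightarrow> nat \<Rightarrow> nat)" where
  "rank_tensor N S = (\<lambda>i j k. dense_rank N (\<lambda>i' j'. S i' j' k) i j)"

(* TransE of size r: A i l = (a_i)_l, R k l = (r_k)_l for l < r *)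
definition transE_score :: "nat \<Rightarrow> (nat \<Rightarrow> nat \<Rightarrow> real) \<Rightarrow> (nat \<Rightarrow> nat \<Rightarrow> real) \<Rightarrow> (nat \<Rightarrow> nat \<Rightarrow> nat \<Rightarrow> real)" where
  "transE_score r A R = (\<lambda>i j k. - (\<Sum>l<r. (A i l + R k l - A j l)\<^sup>2))"

definition M_TransE :: "(nat \<Rightarrow> nat \<Rightarrow> nat \<Rightarrow> real) set" where
  "M_TransE = {transE_score r A R | r A R. r \<ge> 1}"

definition consistent :: "nat \<Rightarrow> nat \<Rightarrow> (nat \<Rightarrow> nat \<Rightarrow> nat \<Rightarrow> nat) \<Rightarrow> (nat \<Rightarrow> nat \<Rightarrow> nat \<Rightarrow> bool) \<Rightarrow> bool" where
  "consistent N K P B \<longleftrightarrow>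
     (\<forall>k\<in>{1..K}. \<forall>i\<in>{1..N}. \<forall>j\<in>{1..N}. \<forall>i'\<in>{1..N}. \<forall>j'\<in>{1..N}.
        B i j k \<and> \<not> B i' j' k \<longrightarrow> P i j k < P i' j' k)"

end

theory Submission
  imports Defs
begin

text \<open>For every relation vector r and entity vectors a, b,
  \<open>\<parallel>a + r - b\<parallel>\<^sup>2 + \<parallel>b + r - a\<parallel>\<^sup>2 = 2\<parallel>r\<parallel>\<^sup>2 + 2\<parallel>a - b\<parallel>\<^sup>2 \<ge> \<parallel>a + r - a\<parallel>\<^sup>2 + \<parallel>b + r - b\<parallel>\<^sup>2\<close>,
  so TransE can never score both (i, j) and (j, i) strictly above both (i, i) and (j, j).
  Since dense ranks reverse the order of scores, no TransE ranking is consistent with the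
  Boolean tensor that holds exactly at (1, 2) and (2, 1).\<close>

lemma dense_rank_antimono:
  assumes "S a b \<le> S c d"
  shows "dense_rank N S c d \<le> dense_rank N S a b"
proof -
  let ?above = "\<lambda>x y. {v. \<exists>i'\<in>{1..N}. \<exists>j'\<in>{1..N}. v = S i' j' \<and> v > S x y}"
  have "finite (?above a b)"
    by (rule finite_subset[of _ "(\<lambda>(i, j). S i j) ` ({1..N} \<times> {1..N})"]) auto
  moreover have "?above c d \<subseteq> ?above a b"
    using assms by auto
  ultimately show ?thesis
    unfolding dense_rank_def by (simp add: card_mono)
qed

lemma consistent_rank_tensor_imp_score_less:
  assumes "consistent N K (rank_tensor N S) B"
    and "k \<in> {1..K}" "i \<in> {1..N}" "j \<in> {1..N}" "i' \<in> {1..N}" "j' \<in> {1..N}"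
    and "B i j k" "\<not> B i' j' k"
  shows "S i' j' k < S i j k"
proof (rule ccontr)
  assume "\<not> S i' j' k < S i j k"
  then have "dense_rank N (\<lambda>x y. S x y k) i' j' \<le> dense_rank N (\<lambda>x y. S x y k) i j"
    by (intro dense_rank_antimono) simp
  moreover have "rank_tensor N S i j k < rank_tensor N S i' j' k"
    using assms unfolding consistent_def by blast
  ultimately show False
    unfolding rank_tensor_def by simp
qed

lemma transE_score_swap_le:
  "transE_score r A R i j k + transE_score r A R j i k
     \<le> transE_score r A R i i k + transE_score r A R j j k"
proof -
  have "(\<Sum>l<r. (A i l + R k l - A i l)\<^sup>2 + (A j l + R k l - A j l)\<^sup>2)
          \<le> (\<Sum>l<r. (A i l + R k l - A j l)\<^sup>2 + (A j l + R k l - A i l)\<^sup>2)"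
  proof (rule sum_mono)
    fix l
    have "0 \<le> 2 * (A i l - A j l)\<^sup>2"
      by simp
    then show "(A i l + R k l - A i l)\<^sup>2 + (A j l + R k l - A j l)\<^sup>2
        \<le> (A i l + R k l - A j l)\<^sup>2 + (A j l + R k l - A i l)\<^sup>2"
      by (simp add: power2_eq_square algebra_simps)
  qed
  then show ?thesis
    unfolding transE_score_def sum.distrib by linarith
qed

theorem theorem10:
  fixes N K :: nat
  assumes "N \<ge> 2" and "K \<ge> 1"
  shows "\<exists>B :: nat \<Rightarrow> nat \<Rightarrow> nat \<Rightarrow> bool.
           \<not> (\<exists>P \<in> rank_tensor N ` M_TransE. consistent N K P B)"
proof
  let ?B = "\<lambda>i j k::nat. (i = 1 \<and> j = (2::nat)) \<or> (i = 2 \<and> j = 1)"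
  show "\<not> (\<exists>P \<in> rank_tensor N ` M_TransE. consistent N K P ?B)"
  proof
    assume "\<exists>P \<in> rank_tensor N ` M_TransE. consistent N K P ?B"
    then obtain r A R where cons: "consistent N K (rank_tensor N (transE_score r A R)) ?B"
      unfolding M_TransE_def by auto
    have indices: "(1::nat) \<in> {1..K}" "(1::nat) \<in> {1..N}" "(2::nat) \<in> {1..N}"
      using assms by auto
    have "transE_score r A R 1 1 1 < transE_score r A R 1 2 1"
      "transE_score r A R 2 2 1 < transE_score r A R 2 1 1"
      using consistent_rank_tensor_imp_score_less[OF cons] indices by auto
    with transE_score_swap_le[of r A R 1 2 1] show False
      by linarith
  qed
qed

end
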